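(* Let $\eta,\delta\in(0,1)$ and let $G$ be a graph on $n$ vertices whose matrix $\mathbf{G}$ is positive semidefinite. Let $\mathrm{val}_{\mathbf{G}}(\delta)=\max_{\|x\|_2=1,\|x\|_0\le\delta n}x^{\intercal}\mathbf{G}x$. If some $S\subset V$ with $|S|=\delta n$ has $\Phi_G(S)\le\eta$, then $\mathrm{val}_{\mathbf{G}}(\delta)\ge 1-\eta$. If every $S\subset V$ with $|S|\le 2\delta n$ has $\Phi_G(S)\ge 1-\eta$, then $\mathrm{val}_{\mathbf{G}}(\delta)\le\sqrt{1-(1-\eta)^2}$.
   Context: A (edge-weighted, 1-regular) graph $G$ on vertex set $V$ with $|V|=n$ is given by a symmetric matrix $\mathbf{G}$ with nonnegative entries whose rows all sum to $1$. For $S\subset V$, $\Phi_G(S)=\frac{1}{|S|}\sum_{i\in S,j\notin S}\mathbf{G}_{ij}$. $\|x\|_0$ is the number of nonzero entries of $x$. *)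

theory Defs
  imports "HOL-Analysis.Analysis"
begin

text \<open>A 1-regular edge-weighted graph on the finite vertex type 'a, given by its matrix.\<close>
definition graph_matrix :: "('a::finite \<Rightarrow> 'a \<Rightarrow> real) \<Rightarrow> bool" where
  "graph_matrix G \<longleftrightarrow> (\<forall>i j. G i j = G j i) \<and> (\<forall>i j. 0 \<le> G i j) \<and> (\<forall>i. (\<Sum>j\<in>UNIV. G i j) = 1)"

definition quad_form :: "('a::finite \<Rightarrow> 'a \<Rightarrow> real) \<Rightarrow> ('a \<Rightarrow> real) \<Rightarrow> real" where
  "quad_form G x = (\<Sum>i\<in>UNIV. \<Sum>j\<in>UNIV. x i * G i j * x j)"

definition psd :: "('a::finite \<Rightarrow> 'a \<Rightarrow> real) \<Rightarrow> bool" where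
  "psd G \<longleftrightarrow> (\<forall>x. 0 \<le> quad_form G x)"

definition expansion :: "('a::finite \<Rightarrow> 'a \<Rightarrow> real) \<Rightarrow> 'a set \<Rightarrow> real" where
  "expansion G S = (1 / real (card S)) * (\<Sum>i\<in>S. \<Sum>j\<in>UNIV - S. G i j)"

definition l2norm :: "('a::finite \<Rightarrow> real) \<Rightarrow> real" where
  "l2norm x = sqrt (\<Sum>i\<in>UNIV. (x i)\<^sup>2)"

definition l0norm :: "('a::finite \<Rightarrow> real) \<Rightarrow> nat" where
  "l0norm x = card {i. x i \<noteq> 0}"

definition sparse_val :: "('a::finite \<Rightarrow> 'a \<Rightarrow> real) \<Rightarrow> real \<Rightarrow> real" where
  "sparse_val G \<delta> = Sup {quad_form G x | x. l2norm x = 1 \<and> real (l0norm x) \<le> \<delta> * real CARD('a)}"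

end

theory Submission
  imports Defs
begin

text \<open>
  The normalised indicator of a set S is a sparse unit vector whose quadratic form is
  1 - \<Phi>(S); this gives the lower bound.

  For the upper bound, a sparse unit vector x may be replaced by z = |x|. Split
  z_i z_j = min(z_i, z_j)^2 + min(z_i, z_j) |z_i - z_j|. The first part,
  m = \<Sum> G_ij min(z_i^2, z_j^2), is a positive combination of the inner edge weights of
  the level sets of z^2; these sets lie in the support of x, so the expansion hypothesis
  gives m \<le> \<eta>. Cauchy-Schwarz bounds the second part C by
  C^2 \<le> m \<Sum> G_ij (z_i - z_j)^2 = m (2 - 2 z^T G z). Eliminating C gives
  (z^T G z)^2 \<le> 2m - m^2 \<le> 1 - (1 - \<eta>)^2.
\<close>

lemma weighted_Cauchy_Schwarz_sum:
  fixes w f g :: "'b \<Rightarrow> real"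
  assumes "\<And>i. i \<in> I \<Longrightarrow> 0 \<le> w i"
  shows "(\<Sum>i\<in>I. w i * f i * g i)\<^sup>2 \<le> (\<Sum>i\<in>I. w i * (f i)\<^sup>2) * (\<Sum>i\<in>I. w i * (g i)\<^sup>2)"
proof -
  have "(\<Sum>i\<in>I. w i * f i * g i) = (\<Sum>i\<in>I. (sqrt (w i) * f i) * (sqrt (w i) * g i))"
    "(\<Sum>i\<in>I. w i * (f i)\<^sup>2) = (\<Sum>i\<in>I. (sqrt (w i) * f i)\<^sup>2)"
    "(\<Sum>i\<in>I. w i * (g i)\<^sup>2) = (\<Sum>i\<in>I. (sqrt (w i) * g i)\<^sup>2)"
    using assms by (auto intro!: sum.cong simp: power_mult_distrib algebra_simps
        simp flip: power2_eq_square)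
  then show ?thesis using Cauchy_Schwarz_ineq_sum by metis
qed

lemma graph_matrix_nonneg: "graph_matrix G \<Longrightarrow> 0 \<le> G i j"
  by (simp add: graph_matrix_def)

lemma graph_matrix_row_sum_one: "graph_matrix G \<Longrightarrow> (\<Sum>j\<in>UNIV. G i j) = 1"
  unfolding graph_matrix_def by blast

lemma graph_matrix_row_sum:
  assumes "graph_matrix G"
  shows "(\<Sum>i\<in>UNIV. \<Sum>j\<in>UNIV. G i j * f i) = (\<Sum>i\<in>UNIV. f i)"
  using graph_matrix_row_sum_one[OF assms] by (simp flip: sum_distrib_right)

lemma graph_matrix_col_sum:
  assumes "graph_matrix G"
  shows "(\<Sum>i\<in>UNIV. \<Sum>j\<in>UNIV. G i j * f j) = (\<Sum>j\<in>UNIV. f j)"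
proof -
  have "(\<Sum>i\<in>UNIV. \<Sum>j\<in>UNIV. G i j * f j) = (\<Sum>j\<in>UNIV. \<Sum>i\<in>UNIV. G j i * f j)"
    using assms by (subst sum.swap) (simp add: graph_matrix_def)
  then show ?thesis using graph_matrix_row_sum[OF assms] by simp
qed

lemma graph_matrix_sum_sq_diff:
  assumes "graph_matrix G"
  shows "(\<Sum>i\<in>UNIV. \<Sum>j\<in>UNIV. G i j * (x i - x j)\<^sup>2) = 2 * (\<Sum>i\<in>UNIV. (x i)\<^sup>2) - 2 * quad_form G x"
proof -
  have "(\<Sum>i\<in>UNIV. \<Sum>j\<in>UNIV. G i j * (x i - x j)\<^sup>2) =
      (\<Sum>i\<in>UNIV. \<Sum>j\<in>UNIV. G i j * (x i)\<^sup>2) + (\<Sum>i\<in>UNIV. \<Sum>j\<in>UNIV. G i j * (x j)\<^sup>2)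
      - 2 * quad_form G x"
    by (simp add: quad_form_def power2_eq_square algebra_simps sum.distrib sum_subtractf
        sum_distrib_left)
  then show ?thesis
    using graph_matrix_row_sum[OF assms] graph_matrix_col_sum[OF assms] by simp
qed

lemma quad_form_le_sum_sq:
  assumes "graph_matrix G"
  shows "quad_form G x \<le> (\<Sum>i\<in>UNIV. (x i)\<^sup>2)"
proof -
  have "0 \<le> (\<Sum>i\<in>UNIV. \<Sum>j\<in>UNIV. G i j * (x i - x j)\<^sup>2)"
    using graph_matrix_nonneg[OF assms] by (intro sum_nonneg mult_nonneg_nonneg) auto
  then show ?thesis unfolding graph_matrix_sum_sq_diff[OF assms] by simp
qed

lemma quad_form_le_abs:
  assumes "graph_matrix G"
  shows "quad_form G x \<le> quad_form G (\<lambda>i. \<bar>x i\<bar>)"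
  unfolding quad_form_def
proof (intro sum_mono)
  fix i j
  have "x i * G i j * x j \<le> \<bar>x i * G i j * x j\<bar>" by simp
  also have "\<dots> = \<bar>x i\<bar> * G i j * \<bar>x j\<bar>"
    using graph_matrix_nonneg[OF assms] by (simp add: abs_mult)
  finally show "x i * G i j * x j \<le> \<bar>x i\<bar> * G i j * \<bar>x j\<bar>" .
qed

lemma quad_form_scale: "quad_form G (\<lambda>i. c * x i) = c\<^sup>2 * quad_form G x"
  by (simp add: quad_form_def sum_distrib_left power2_eq_square algebra_simps)

lemma quad_form_indicator_eq_expansion:
  assumes "graph_matrix G" and "S \<noteq> {}"
  shows "quad_form G (indicator S) = real (card S) * (1 - expansion G S)"
proof -
  have "(\<Sum>j\<in>S. G i j) + (\<Sum>j\<in>UNIV - S. G i j) = 1" for i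
    using graph_matrix_row_sum_one[OF assms(1)] sum.subset_diff[of S UNIV "G i"] by simp
  then have "(\<Sum>i\<in>S. \<Sum>j\<in>S. G i j) + (\<Sum>i\<in>S. \<Sum>j\<in>UNIV - S. G i j) = real (card S)"
    by (simp flip: sum.distrib)
  moreover have "quad_form G (indicator S) = (\<Sum>i\<in>S. \<Sum>j\<in>S. G i j)"
    by (simp add: quad_form_def indicator_def sum.If_cases if_distrib cong: if_cong)
  ultimately show ?thesis
    using assms(2) by (simp add: expansion_def algebra_simps)
qed

lemma sum_indicator_UNIV: "(\<Sum>i\<in>UNIV. indicator S i) = real (card (S :: 'a::finite set))"
  using Indicator_Function.sum_mult_indicator[of UNIV "\<lambda>_. 1" S] by simp

lemma sum_sq_indicator_UNIV: "(\<Sum>i\<in>UNIV. (indicator S i)\<^sup>2) = real (card (S :: 'a::finite set))"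
proof -
  have "(indicator S i)\<^sup>2 = (indicator S i :: real)" for i
    by (simp add: indicator_def)
  then show ?thesis by (simp add: sum_indicator_UNIV)
qed

definition min_form :: "('a::finite \<Rightarrow> 'a \<Rightarrow> real) \<Rightarrow> ('a \<Rightarrow> real) \<Rightarrow> real" where
  "min_form G y = (\<Sum>i\<in>UNIV. \<Sum>j\<in>UNIV. G i j * min (y i) (y j))"

lemma min_form_peel:
  assumes "\<And>i. 0 \<le> y i" and "\<And>i. y i \<noteq> 0 \<Longrightarrow> c \<le> y i"
  defines "S \<equiv> {i. y i \<noteq> 0}"
  shows "min_form G y = c * quad_form G (indicator S) + min_form G (\<lambda>i. y i - c * indicator S i)"
proof -
  have "min (y i) (y j) = c * (indicator S i * indicator S j)
      + min (y i - c * indicator S i) (y j - c * indicator S j)" for i j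
    using assms(1,2)[of i] assms(1,2)[of j] by (cases "i \<in> S"; cases "j \<in> S") (auto simp: S_def min_def)
  then show ?thesis
    by (simp add: min_form_def quad_form_def sum_distrib_left algebra_simps sum.distrib)
qed

lemma min_form_le_sum:
  assumes "\<And>i. 0 \<le> y i" and "{i. y i \<noteq> 0} \<subseteq> T"
    and "\<And>S. S \<subseteq> T \<Longrightarrow> S \<noteq> {} \<Longrightarrow> quad_form G (indicator S) \<le> \<eta> * real (card S)"
  shows "min_form G y \<le> \<eta> * (\<Sum>i\<in>UNIV. y i)"
  using assms(1,2)
proof (induction "card {i. y i \<noteq> 0}" arbitrary: y rule: less_induct)
  case less
  define S where "S = {i. y i \<noteq> 0}"
  show ?case
  proof (cases "S = {}")
    case True
    then show ?thesis by (simp add: S_def min_form_def)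
  next
    case False
    define c where "c = Min (y ` S)"
    have "c \<in> y ` S"
      using False unfolding c_def by (intro Min_in) auto
    then obtain i0 where i0: "i0 \<in> S" "y i0 = c" by auto
    have c_le: "c \<le> y i" if "y i \<noteq> 0" for i
      using that by (simp add: c_def S_def)
    define y' where "y' = (\<lambda>i. y i - c * indicator S i)"
    have y'_nonneg: "0 \<le> y' i" for i
      using c_le[of i] less.prems(1)[of i] by (auto simp: y'_def S_def indicator_def)
    have supp: "{i. y' i \<noteq> 0} \<subseteq> S - {i0}"
      using i0 by (auto simp: y'_def S_def)
    then have "card {i. y' i \<noteq> 0} < card S"
      using i0 card_mono[OF _ supp] card_Diff1_less[of S i0] by simp
    then have IH: "min_form G y' \<le> \<eta> * (\<Sum>i\<in>UNIV. y' i)"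
      using less.hyps[of y'] y'_nonneg supp less.prems(2) by (auto simp: S_def)
    have c_pos: "0 < c"
      using i0 less.prems(1)[of i0] by (auto simp: S_def)
    have "min_form G y = c * quad_form G (indicator S) + min_form G y'"
      using min_form_peel[of y c G] less.prems(1) c_le by (simp add: y'_def S_def)
    also have "\<dots> \<le> c * (\<eta> * real (card S)) + \<eta> * (\<Sum>i\<in>UNIV. y' i)"
      using assms(3)[of S] False less.prems(2) c_pos IH
      by (intro add_mono mult_left_mono) (auto simp: S_def)
    also have "\<dots> = \<eta> * (\<Sum>i\<in>UNIV. y i)"
      by (simp add: y'_def sum_subtractf sum_indicator_UNIV flip: sum_distrib_left)
        (simp add: algebra_simps)
    finally show ?thesis .
  qed
qed

lemma quad_form_sq_le_min_form:
  assumes gm: "graph_matrix G" and z_nonneg: "\<And>i. 0 \<le> z i"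
    and unit: "(\<Sum>i\<in>UNIV. (z i)\<^sup>2) = 1"
  defines "m \<equiv> min_form G (\<lambda>i. (z i)\<^sup>2)"
  shows "(quad_form G z)\<^sup>2 \<le> 2 * m - m\<^sup>2"
proof -
  define a where "a i j = min (z i) (z j)" for i j
  define b where "b i j = \<bar>z i - z j\<bar>" for i j
  define C where "C = (\<Sum>i\<in>UNIV. \<Sum>j\<in>UNIV. G i j * a i j * b i j)"
  have "min ((z i)\<^sup>2) ((z j)\<^sup>2) = (a i j)\<^sup>2" for i j
    using z_nonneg[of i] z_nonneg[of j] power_mono[of "z i" "z j" 2] power_mono[of "z j" "z i" 2]
    by (auto simp: a_def min_def)
  then have m_eq: "m = (\<Sum>i\<in>UNIV. \<Sum>j\<in>UNIV. G i j * (a i j)\<^sup>2)"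
    by (simp add: m_def min_form_def)
  have "z i * G i j * z j = G i j * (a i j)\<^sup>2 + G i j * a i j * b i j" for i j
    by (simp add: a_def b_def min_def power2_eq_square algebra_simps)
  then have P_eq: "quad_form G z = m + C"
    by (simp add: quad_form_def m_eq C_def sum.distrib)
  have "C\<^sup>2 \<le> m * (\<Sum>i\<in>UNIV. \<Sum>j\<in>UNIV. G i j * (b i j)\<^sup>2)"
    using weighted_Cauchy_Schwarz_sum[of UNIV "\<lambda>(i, j). G i j" "\<lambda>(i, j). a i j" "\<lambda>(i, j). b i j"]
      graph_matrix_nonneg[OF gm]
    by (simp add: C_def m_eq sum.cartesian_product split_beta)
  also have "(\<Sum>i\<in>UNIV. \<Sum>j\<in>UNIV. G i j * (b i j)\<^sup>2) = 2 - 2 * quad_form G z"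
    using graph_matrix_sum_sq_diff[OF gm, of z] unit by (simp add: b_def)
  finally have "C\<^sup>2 \<le> m * (2 - 2 * (m + C))"
    unfolding P_eq .
  then show ?thesis
    unfolding P_eq by (simp add: power2_eq_square algebra_simps)
qed

lemma quad_form_le_of_expansion:
  assumes gm: "graph_matrix G" and "\<eta> \<le> 1"
    and expanding: "\<And>S. S \<subseteq> {i. x i \<noteq> 0} \<Longrightarrow> S \<noteq> {} \<Longrightarrow> 1 - \<eta> \<le> expansion G S"
    and unit: "l2norm x = 1"
  shows "quad_form G x \<le> sqrt (1 - (1 - \<eta>)\<^sup>2)"
proof -
  define z where "z = (\<lambda>i. \<bar>x i\<bar>)"
  define m where "m = min_form G (\<lambda>i. (z i)\<^sup>2)"
  have z_unit: "(\<Sum>i\<in>UNIV. (z i)\<^sup>2) = 1"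
    using unit by (simp add: z_def l2norm_def)
  have "quad_form G (indicator S) \<le> \<eta> * real (card S)"
    if "S \<subseteq> {i. x i \<noteq> 0}" "S \<noteq> {}" for S
    using quad_form_indicator_eq_expansion[OF gm that(2)] expanding[OF that]
      mult_left_mono[of "1 - expansion G S" \<eta> "real (card S)"]
    by (simp add: algebra_simps)
  then have m_le: "m \<le> \<eta>"
    using min_form_le_sum[of "\<lambda>i. (z i)\<^sup>2" "{i. x i \<noteq> 0}" G \<eta>] z_unit
    by (simp add: m_def z_def)
  have m_nonneg: "0 \<le> m"
    using graph_matrix_nonneg[OF gm] by (auto simp: m_def min_form_def intro!: sum_nonneg)
  have "quad_form G x \<le> quad_form G z"
    using quad_form_le_abs[OF gm] by (simp add: z_def)
  also have "\<dots> \<le> sqrt (1 - (1 - \<eta>)\<^sup>2)"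
  proof (rule real_le_rsqrt)
    have "(quad_form G z)\<^sup>2 \<le> 2 * m - m\<^sup>2"
      using quad_form_sq_le_min_form[OF gm _ z_unit] by (simp add: z_def m_def)
    also have "\<dots> \<le> 1 - (1 - \<eta>)\<^sup>2"
      using mult_nonneg_nonneg[of "\<eta> - m" "2 - \<eta> - m"] m_le m_nonneg \<open>\<eta> \<le> 1\<close>
      by (simp add: power2_eq_square algebra_simps)
    finally show "(quad_form G z)\<^sup>2 \<le> 1 - (1 - \<eta>)\<^sup>2" .
  qed
  finally show ?thesis .
qed

lemma quad_form_le_sparse_val:
  fixes G :: "'a::finite \<Rightarrow> 'a \<Rightarrow> real"
  assumes "graph_matrix G" and "l2norm x = 1" and "real (l0norm x) \<le> \<delta> * real CARD('a)"
  shows "quad_form G x \<le> sparse_val G \<delta>"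
  unfolding sparse_val_def
proof (rule cSup_upper)
  show "quad_form G x \<in> {quad_form G x |x. l2norm x = 1 \<and> real (l0norm x) \<le> \<delta> * real CARD('a)}"
    using assms(2,3) by blast
  show "bdd_above {quad_form G x |x::'a \<Rightarrow> real. l2norm x = 1 \<and> real (l0norm x) \<le> \<delta> * real CARD('a)}"
  proof (intro bdd_aboveI[of _ 1], clarify)
    fix y :: "'a \<Rightarrow> real"
    assume "l2norm y = 1"
    then show "quad_form G y \<le> 1"
      using quad_form_le_sum_sq[OF assms(1), of y] by (simp add: l2norm_def)
  qed
qed

lemma sparse_val_le:
  fixes G :: "'a::finite \<Rightarrow> 'a \<Rightarrow> real"
  assumes "1 \<le> \<delta> * real CARD('a)"
    and "\<And>x. l2norm x = 1 \<Longrightarrow> real (l0norm x) \<le> \<delta> * real CARD('a) \<Longrightarrow> quad_form G x \<le> b"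
  shows "sparse_val G \<delta> \<le> b"
  unfolding sparse_val_def
proof (rule cSup_least)
  fix i :: 'a
  have "l2norm (indicator {i}) = 1" "l0norm (indicator {i} :: 'a \<Rightarrow> real) = 1"
    using sum_sq_indicator_UNIV[of "{i}"] by (simp_all add: l2norm_def l0norm_def indicator_def)
  then show "{quad_form G x |x. l2norm x = 1 \<and> real (l0norm x) \<le> \<delta> * real CARD('a)} \<noteq> {}"
    using assms(1) by fastforce
qed (use assms(2) in blast)

lemma expansion_le_sparse_val:
  fixes G :: "'a::finite \<Rightarrow> 'a \<Rightarrow> real"
  assumes gm: "graph_matrix G" and "S \<noteq> {}" and "real (card S) \<le> \<delta> * real CARD('a)"
  shows "1 - expansion G S \<le> sparse_val G \<delta>"
proof -
  define v where "v = (\<lambda>i. 1 / sqrt (card S) * indicator S i)"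
  have card_pos: "0 < card S"
    using \<open>S \<noteq> {}\<close> by (simp add: card_gt_0_iff)
  have "(\<Sum>i\<in>UNIV. (v i)\<^sup>2) = 1"
    using \<open>S \<noteq> {}\<close> sum_sq_indicator_UNIV[of S]
    by (simp add: v_def power_mult_distrib power_divide flip: sum_divide_distrib)
  then have "l2norm v = 1" by (simp add: l2norm_def)
  moreover have "l0norm v = card S"
    using \<open>S \<noteq> {}\<close> by (simp add: l0norm_def v_def indicator_def)
  moreover have "quad_form G v = 1 - expansion G S"
    using quad_form_indicator_eq_expansion[OF gm \<open>S \<noteq> {}\<close>] card_pos
    unfolding v_def quad_form_scale by (simp add: power_divide \<open>S \<noteq> {}\<close>)
  ultimately show ?thesis
    using quad_form_le_sparse_val[OF gm] assms(3) by metis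
qed

theorem theorem4:
  fixes G :: "'a::finite \<Rightarrow> 'a \<Rightarrow> real" and \<eta> \<delta> :: real
  assumes "0 < \<eta>" "\<eta> < 1" "0 < \<delta>" "\<delta> < 1"
    and "graph_matrix G" and "psd G"
    and "1 \<le> \<delta> * real CARD('a)"
  shows "((\<exists>S. real (card S) = \<delta> * real CARD('a) \<and> expansion G S \<le> \<eta>)
           \<longrightarrow> sparse_val G \<delta> \<ge> 1 - \<eta>)
         \<and> ((\<forall>S. S \<noteq> {} \<and> real (card S) \<le> 2 * \<delta> * real CARD('a) \<longrightarrow> expansion G S \<ge> 1 - \<eta>)
           \<longrightarrow> sparse_val G \<delta> \<le> sqrt (1 - (1 - \<eta>)\<^sup>2))"
proof (intro conjI impI)
  assume "\<exists>S. real (card S) = \<delta> * real CARD('a) \<and> expansion G S \<le> \<eta>"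
  then obtain S where S: "real (card S) = \<delta> * real CARD('a)" "expansion G S \<le> \<eta>"
    by blast
  then have "S \<noteq> {}" using assms(7) by auto
  then have "1 - expansion G S \<le> sparse_val G \<delta>"
    using expansion_le_sparse_val[OF assms(5)] S(1) by simp
  with S(2) show "1 - \<eta> \<le> sparse_val G \<delta>" by linarith
next
  assume expanding: "\<forall>S. S \<noteq> {} \<and> real (card S) \<le> 2 * \<delta> * real CARD('a) \<longrightarrow> 1 - \<eta> \<le> expansion G S"
  show "sparse_val G \<delta> \<le> sqrt (1 - (1 - \<eta>)\<^sup>2)"
  proof (rule sparse_val_le[OF assms(7)], rule quad_form_le_of_expansion[OF assms(5)])
    fix x :: "'a \<Rightarrow> real" and S
    assume "real (l0norm x) \<le> \<delta> * real CARD('a)" "S \<subseteq> {i. x i \<noteq> 0}" "S \<noteq> {}"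
    moreover have "card S \<le> l0norm x"
      using \<open>S \<subseteq> {i. x i \<noteq> 0}\<close> by (simp add: l0norm_def card_mono)
    ultimately show "1 - \<eta> \<le> expansion G S"
      using expanding assms(3) by auto
  qed (use assms(2) in auto)
qed

end
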